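(* The function $2^\omega\times\mathbf{K}\to[0;1]$, $(z,K)\mapsto\mathcal{D}^-_K(z)$, is of Baire class $2$ but not of Baire class $1$.
   Context: $2^{\omega}$ is the Cantor space; $N_s=\{x\in2^\omega:s\subset x\}$; $\mu$ is the coin-tossing measure, $\mu(N_s)=2^{-\mathrm{lh}(s)}$. $\mathbf{K}$ is the Polish space of compact subsets of $2^\omega$ with the Vietoris topology. $\mathcal{D}^-_K(z)=\liminf_{n\to\infty}\mu(K\cap N_{z\restriction n})/\mu(N_{z\restriction n})$. A function between metrizable spaces is of Baire class $\alpha$ if the preimage of every open set is in $\boldsymbol{\Sigma}^0_{\alpha+1}$. *)

theory Defs
  imports "HOL-Analysis.Analysis" "HOL-Probability.Probability"
begin

definition cantor_top :: "(nat \<Rightarrow> bool) topology" where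
  "cantor_top = product_topology (\<lambda>_. discrete_topology UNIV) UNIV"

definition coin :: "(nat \<Rightarrow> bool) measure" where
  "coin = (\<Pi>\<^sub>M i\<in>(UNIV::nat set). measure_pmf (bernoulli_pmf (1/2)))"

definition cyl :: "(nat \<Rightarrow> bool) \<Rightarrow> nat \<Rightarrow> (nat \<Rightarrow> bool) set" where
  "cyl z n = {x. \<forall>i<n. x i = z i}"

definition lower_density :: "(nat \<Rightarrow> bool) set \<Rightarrow> (nat \<Rightarrow> bool) \<Rightarrow> real" where
  "lower_density K z = real_of_ereal (liminf (\<lambda>n. ereal
      (measure coin (K \<inter> cyl z n) / measure coin (cyl z n))))"

definition vietoris :: "'a topology \<Rightarrow> 'a set topology" where
  "vietoris T = topology_generated_by
     ({{K. compactin T K \<and> K \<subseteq> U} | U. openin T U} \<union>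
      {{K. compactin T K \<and> K \<inter> U \<noteq> {}} | U. openin T U})"

fun sigma0 :: "'a topology \<Rightarrow> nat \<Rightarrow> 'a set set" where
  "sigma0 X 0 = {}"
| "sigma0 X (Suc 0) = {U. openin X U}"
| "sigma0 X (Suc (Suc n)) =
     {\<Union>(range A) | A :: nat \<Rightarrow> 'a set. \<forall>i. A i \<subseteq> topspace X \<and> topspace X - A i \<in> sigma0 X (Suc n)}"

definition baire_class :: "'a topology \<Rightarrow> nat \<Rightarrow> ('a \<Rightarrow> real) \<Rightarrow> bool" where
  "baire_class X \<alpha> f \<longleftrightarrow>
     (\<forall>U. open U \<longrightarrow> {x \<in> topspace X. f x \<in> U} \<in> sigma0 X (Suc \<alpha>))"

end

theory Submission
  imports Defs
begin

(* The m-th cylinder neighbourhood of a compact set K, the union of the length-m cylinders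
   meeting K, is clopen, decreases to K as m grows, and depends locally constantly on K in the
   Vietoris topology. Hence mu(K inter N_{z|n}) / mu(N_{z|n}) is the infimum of countably many
   locally constant functions of (z, K), and writing the liminf with rational bounds shows that
   {D^- > a} and {D^- < b} are countable unions of G_delta sets; so preimages of open sets are
   Sigma^0_3.
   For the lower bound, send x to the compact set of those y whose first 1 (if any) sits at a
   position where x is 0. This map is continuous, and the density of its value at the zero
   sequence is below 1 exactly when x has infinitely many 1s. That set is dense with countable
   dense complement, so by the Baire category theorem it is not F_sigma, i.e. not Sigma^0_2. *)

section \<open>Cantor space\<close>

lemma topspace_cantor_top [simp]: "topspace cantor_top = UNIV"
  by (simp add: cantor_top_def)

lemma mem_cyl_self [simp]: "x \<in> cyl x n"
  by (simp add: cyl_def)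

lemma cyl_eq_cyl: "y \<in> cyl x n \<Longrightarrow> cyl y n = cyl x n"
  by (auto simp: cyl_def)

lemma openin_cantor_top_cyl: "openin cantor_top (cyl z n)"
  unfolding cantor_top_def openin_product_topology_alt
proof (intro ballI exI conjI)
  let ?U = "\<lambda>i. if i < n then {z i} else UNIV"
  show "finite {i \<in> UNIV. ?U i \<noteq> topspace (discrete_topology UNIV)}"
    by (rule finite_subset[of _ "{..<n}"]) auto
  show "Pi\<^sub>E UNIV ?U \<subseteq> cyl z n"
    by (auto simp: cyl_def PiE_iff split: if_splits)
  show "x \<in> Pi\<^sub>E UNIV ?U" if "x \<in> cyl z n" for x
    using that by (auto simp: cyl_def)
qed auto

lemma openin_cantor_top_imp_cyl_subset:
  assumes "openin cantor_top U" "x \<in> U"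
  obtains n where "cyl x n \<subseteq> U"
proof -
  have "\<exists>V. finite {i \<in> UNIV. V i \<noteq> topspace (discrete_topology UNIV)} \<and>
      (\<forall>i\<in>UNIV. openin (discrete_topology UNIV) (V i)) \<and> x \<in> Pi\<^sub>E UNIV V \<and> Pi\<^sub>E UNIV V \<subseteq> U"
    using assms(1)[unfolded cantor_top_def openin_product_topology_alt] assms(2) by (rule bspec)
  then obtain V where V: "finite {i. V i \<noteq> UNIV}" "x \<in> Pi\<^sub>E UNIV V" "Pi\<^sub>E UNIV V \<subseteq> U"
    by auto
  from V(1) obtain n where "\<forall>i\<in>{i. V i \<noteq> UNIV}. i < n"
    unfolding finite_nat_set_iff_bounded by blast
  then have n: "V i = UNIV" if "n \<le> i" for i
    using that by (meson mem_Collect_eq not_le)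
  have "cyl x n \<subseteq> Pi\<^sub>E UNIV V"
  proof
    fix y assume y: "y \<in> cyl x n"
    have "y i \<in> V i" for i
    proof (cases "i < n")
      case True
      then show ?thesis
        using y PiE_mem[OF V(2)] by (simp add: cyl_def)
    qed (simp add: n)
    then show "y \<in> Pi\<^sub>E UNIV V"
      by (simp add: PiE_iff)
  qed
  then show thesis
    by (rule that[OF subset_trans[OF _ V(3)]])
qed

lemma openin_cantor_top_iff: "openin cantor_top U \<longleftrightarrow> (\<forall>x\<in>U. \<exists>n. cyl x n \<subseteq> U)"
proof
  assume "\<forall>x\<in>U. \<exists>n. cyl x n \<subseteq> U"
  then show "openin cantor_top U"
    by (subst openin_subopen) (meson mem_cyl_self openin_cantor_top_cyl)
qed (meson openin_cantor_top_imp_cyl_subset)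

lemma compact_space_cantor_top: "compact_space cantor_top"
  by (simp add: cantor_top_def compact_space_product_topology compact_space_discrete_topology)

lemma Hausdorff_space_cantor_top: "Hausdorff_space cantor_top"
  by (simp add: cantor_top_def Hausdorff_space_product_topology)

lemma compactin_cantor_top_iff_closedin: "compactin cantor_top K \<longleftrightarrow> closedin cantor_top K"
  using compact_space_cantor_top Hausdorff_space_cantor_top closedin_compact_space compactin_imp_closedin
  by blast

lemma finite_cyls: "finite ((\<lambda>k. cyl k m) ` K)"
proof -
  have "(\<lambda>k. cyl k m) ` K \<subseteq> (\<lambda>l. {x. \<forall>i<m. x i = l ! i}) ` {l::bool list. length l = m}"
  proof
    fix c assume "c \<in> (\<lambda>k. cyl k m) ` K"
    then obtain k where "c = cyl k m" by blast
    then have "c = {x. \<forall>i<m. x i = map k [0..<m] ! i}"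
      by (simp add: cyl_def)
    then show "c \<in> (\<lambda>l. {x. \<forall>i<m. x i = l ! i}) ` {l::bool list. length l = m}"
      by (intro image_eqI[of _ _ "map k [0..<m]"]) auto
  qed
  moreover have "finite {l::bool list. length l = m}"
    using finite_lists_length_eq[of "UNIV :: bool set" m] by simp
  ultimately show ?thesis
    by (meson finite_imageI finite_subset)
qed

section \<open>The Vietoris topology\<close>

lemma topspace_vietoris: "topspace (vietoris X) = {K. compactin X K}"
proof -
  let ?A = "{{K. compactin X K \<and> K \<subseteq> U} | U. openin X U}"
  let ?B = "{{K. compactin X K \<and> K \<inter> U \<noteq> {}} | U. openin X U}"
  have 1: "\<Union>(?A \<union> ?B) \<subseteq> {K. compactin X K}"
  proof (rule Union_least)
    fix S assume "S \<in> ?A \<union> ?B"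
    then show "S \<subseteq> {K. compactin X K}"
      by auto
  qed
  have top: "{K. compactin X K} = {K. compactin X K \<and> K \<subseteq> topspace X}"
    using compactin_subset_topspace by auto
  have "{K. compactin X K} \<in> ?A"
    by (intro CollectI exI[of _ "topspace X"] conjI top openin_topspace)
  then have 2: "{K. compactin X K} \<subseteq> \<Union>(?A \<union> ?B)"
    by (intro Union_upper UnI1)
  show ?thesis
    unfolding vietoris_def topology_generated_by_topspace using 1 2 by (rule subset_antisym)
qed

lemma openin_vietoris_subset:
  "openin X U \<Longrightarrow> openin (vietoris X) {K. compactin X K \<and> K \<subseteq> U}"
  unfolding vietoris_def by (rule topology_generated_by_Basis) blast

lemma openin_vietoris_meets:
  "openin X U \<Longrightarrow> openin (vietoris X) {K. compactin X K \<and> K \<inter> U \<noteq> {}}"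
  unfolding vietoris_def by (rule topology_generated_by_Basis) blast

lemma continuous_map_into_vietoris:
  assumes "\<And>x. x \<in> topspace X \<Longrightarrow> compactin Y (f x)"
    and "\<And>U. openin Y U \<Longrightarrow> openin X {x \<in> topspace X. f x \<subseteq> U}"
    and "\<And>U. openin Y U \<Longrightarrow> openin X {x \<in> topspace X. f x \<inter> U \<noteq> {}}"
  shows "continuous_map X (vietoris Y) f"
  unfolding vietoris_def
proof (rule continuous_on_generated_topo)
  fix S assume "S \<in> {{K. compactin Y K \<and> K \<subseteq> U} | U. openin Y U} \<union>
      {{K. compactin Y K \<and> K \<inter> U \<noteq> {}} | U. openin Y U}"
  then obtain U where U: "openin Y U"
    and "S = {K. compactin Y K \<and> K \<subseteq> U} \<or> S = {K. compactin Y K \<and> K \<inter> U \<noteq> {}}"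
    by blast
  then consider "S = {K. compactin Y K \<and> K \<subseteq> U}" | "S = {K. compactin Y K \<and> K \<inter> U \<noteq> {}}"
    by blast
  then show "openin X (f -` S \<inter> topspace X)"
  proof cases
    case 1
    then have "f -` S \<inter> topspace X = {x \<in> topspace X. f x \<subseteq> U}"
      using assms(1) by auto
    then show ?thesis
      using assms(2)[OF U] by simp
  next
    case 2
    then have "f -` S \<inter> topspace X = {x \<in> topspace X. f x \<inter> U \<noteq> {}}"
      using assms(1) by auto
    then show ?thesis
      using assms(3)[OF U] by simp
  qed
next
  have "f ` topspace X \<subseteq> topspace (vietoris Y)"
    using assms(1) by (auto simp: topspace_vietoris)
  then show "f ` topspace X \<subseteq> \<Union>({{K. compactin Y K \<and> K \<subseteq> U} | U. openin Y U} \<union>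
      {{K. compactin Y K \<and> K \<inter> U \<noteq> {}} | U. openin Y U})"
    by (simp only: vietoris_def topology_generated_by_topspace)
qed

lemma openin_Collect_locally_constant:
  assumes "\<And>p. p \<in> topspace X \<Longrightarrow> \<exists>W. openin X W \<and> p \<in> W \<and> (\<forall>q\<in>W. g q = g p)"
  shows "openin X {p \<in> topspace X. P (g p)}"
proof (subst openin_subopen, intro ballI)
  fix p assume "p \<in> {p \<in> topspace X. P (g p)}"
  then have p: "p \<in> topspace X" "P (g p)"
    by simp_all
  then obtain W where W: "openin X W" "p \<in> W" "\<forall>q\<in>W. g q = g p"
    using assms by blast
  have "W \<subseteq> {p \<in> topspace X. P (g p)}"
  proof
    fix q assume "q \<in> W"
    then show "q \<in> {p \<in> topspace X. P (g p)}"
      using openin_subset[OF W(1)] W(3) p(2) by auto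
  qed
  with W(1,2) show "\<exists>T. openin X T \<and> p \<in> T \<and> T \<subseteq> {p \<in> topspace X. P (g p)}"
    by (intro exI[of _ W] conjI)
qed

section \<open>Cylinder neighbourhoods of compact sets\<close>

definition cyl_nbhd :: "nat \<Rightarrow> (nat \<Rightarrow> bool) set \<Rightarrow> (nat \<Rightarrow> bool) set" where
  "cyl_nbhd m K = (\<Union>k\<in>K. cyl k m)"

lemma openin_cantor_top_cyl_nbhd: "openin cantor_top (cyl_nbhd m K)"
  unfolding cyl_nbhd_def by (auto intro: openin_cantor_top_cyl)

lemma subset_cyl_nbhd: "K \<subseteq> cyl_nbhd m K"
  by (auto simp: cyl_nbhd_def)

lemma cyl_nbhd_Suc_subset: "cyl_nbhd (Suc m) K \<subseteq> cyl_nbhd m K"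
  by (auto simp: cyl_nbhd_def cyl_def)

lemma Inter_cyl_nbhd:
  assumes "closedin cantor_top K"
  shows "(\<Inter>m. cyl_nbhd m K) = K"
proof
  show "(\<Inter>m. cyl_nbhd m K) \<subseteq> K"
  proof
    fix y assume y: "y \<in> (\<Inter>m. cyl_nbhd m K)"
    show "y \<in> K"
    proof (rule ccontr)
      assume "y \<notin> K"
      moreover have "openin cantor_top (- K)"
        using assms by (simp add: closedin_def Compl_eq_Diff_UNIV)
      ultimately obtain m where m: "cyl y m \<subseteq> - K"
        by (meson ComplI openin_cantor_top_imp_cyl_subset)
      from y obtain k where "k \<in> K" "y \<in> cyl k m"
        by (auto simp: cyl_nbhd_def)
      then show False
        using m cyl_eq_cyl by (metis ComplD mem_cyl_self subsetD)
    qed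
  qed
qed (meson INT_greatest subset_cyl_nbhd)

lemma cyl_nbhd_subset_cyl_nbhd:
  assumes "K \<subseteq> cyl_nbhd m L"
  shows "cyl_nbhd m K \<subseteq> cyl_nbhd m L"
proof
  fix y assume "y \<in> cyl_nbhd m K"
  then obtain k where k: "k \<in> K" "y \<in> cyl k m"
    by (auto simp: cyl_nbhd_def)
  with assms obtain l where "l \<in> L" "k \<in> cyl l m"
    by (auto simp: cyl_nbhd_def)
  with k(2) show "y \<in> cyl_nbhd m L"
    by (auto simp: cyl_nbhd_def cyl_eq_cyl)
qed

lemma cyl_nbhd_subset_if_meets:
  assumes "\<And>l. l \<in> L \<Longrightarrow> K \<inter> cyl l m \<noteq> {}"
  shows "cyl_nbhd m L \<subseteq> cyl_nbhd m K"
proof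
  fix y assume "y \<in> cyl_nbhd m L"
  then obtain l where l: "l \<in> L" "y \<in> cyl l m"
    by (auto simp: cyl_nbhd_def)
  with assms obtain k where "k \<in> K" "k \<in> cyl l m"
    by blast
  with l(2) show "y \<in> cyl_nbhd m K"
    by (auto simp: cyl_nbhd_def dest: cyl_eq_cyl)
qed

text \<open>Only the finitely many cylinders of length \<open>m\<close> meeting \<open>K\<close> matter for \<open>cyl_nbhd m K\<close>,
  and the Vietoris topology fixes them locally.\<close>
lemma vietoris_locally_constant_cyl_nbhd:
  assumes "closedin cantor_top K0"
  shows "\<exists>W. openin (vietoris cantor_top) W \<and> K0 \<in> W \<and> (\<forall>K\<in>W. cyl_nbhd m K = cyl_nbhd m K0)"
proof (intro exI conjI)
  let ?W = "{K. compactin cantor_top K \<and> K \<subseteq> cyl_nbhd m K0} \<inter>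
    \<Inter>((\<lambda>c. {K. compactin cantor_top K \<and> K \<inter> c \<noteq> {}}) ` (\<lambda>k. cyl k m) ` K0)"
  show "openin (vietoris cantor_top) ?W"
    by (intro openin_Int_Inter finite_imageI finite_cyls openin_vietoris_subset
        openin_cantor_top_cyl_nbhd) (auto intro: openin_vietoris_meets openin_cantor_top_cyl)
  show "K0 \<in> ?W"
    using assms subset_cyl_nbhd[of K0 m] by (auto simp: compactin_cantor_top_iff_closedin)
  show "\<forall>K\<in>?W. cyl_nbhd m K = cyl_nbhd m K0"
  proof
    fix K assume "K \<in> ?W"
    then have "K \<subseteq> cyl_nbhd m K0" "\<And>l. l \<in> K0 \<Longrightarrow> K \<inter> cyl l m \<noteq> {}"
      by auto
    then show "cyl_nbhd m K = cyl_nbhd m K0"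
      by (intro subset_antisym cyl_nbhd_subset_cyl_nbhd cyl_nbhd_subset_if_meets)
  qed
qed

abbreviation cantor_K_top :: "((nat \<Rightarrow> bool) \<times> (nat \<Rightarrow> bool) set) topology" where
  "cantor_K_top \<equiv> prod_topology cantor_top (vietoris cantor_top)"

lemma topspace_cantor_K_top: "topspace cantor_K_top = UNIV \<times> {K. closedin cantor_top K}"
  by (simp add: topspace_vietoris compactin_cantor_top_iff_closedin)

lemma cantor_K_top_locally_constant_cyl_nbhd:
  assumes "p \<in> topspace cantor_K_top"
  shows "\<exists>W. openin cantor_K_top W \<and> p \<in> W \<and>
    (\<forall>q\<in>W. (cyl (fst q) n, cyl_nbhd m (snd q)) = (cyl (fst p) n, cyl_nbhd m (snd p)))"
proof -
  obtain z K0 where p: "p = (z, K0)"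
    by (cases p)
  with assms have K0: "closedin cantor_top K0"
    unfolding topspace_cantor_K_top by simp
  obtain W where W: "openin (vietoris cantor_top) W" "K0 \<in> W" "\<forall>K\<in>W. cyl_nbhd m K = cyl_nbhd m K0"
    using vietoris_locally_constant_cyl_nbhd[OF K0] by blast
  show ?thesis
  proof (intro exI conjI)
    show "openin cantor_K_top (cyl z n \<times> W)"
      using openin_cantor_top_cyl W(1) by (simp add: openin_prod_Times_iff)
    show "p \<in> cyl z n \<times> W"
      using W(2) by (simp add: p)
    show "\<forall>q\<in>cyl z n \<times> W. (cyl (fst q) n, cyl_nbhd m (snd q)) = (cyl (fst p) n, cyl_nbhd m (snd p))"
      using W(3) by (auto simp: p cyl_eq_cyl)
  qed
qed

section \<open>Density ratios\<close>

lemma less_liminf_iff_Rats: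
  fixes u :: "nat \<Rightarrow> real"
  shows "ereal a < liminf (\<lambda>n. ereal (u n)) \<longleftrightarrow> (\<exists>q\<in>\<rat>. a < q \<and> (\<exists>m. \<forall>n\<ge>m. q \<le> u n))"
proof
  assume "ereal a < liminf (\<lambda>n. ereal (u n))"
  then obtain m where "ereal a < (INF n\<in>{m..}. ereal (u n))"
    unfolding liminf_SUP_INF by (auto simp: less_SUP_iff)
  then obtain r where r: "ereal a < real_of_rat r" "real_of_rat r < (INF n\<in>{m..}. ereal (u n))"
    using ereal_dense3 by blast
  have "real_of_rat r \<le> u n" if "m \<le> n" for n
  proof -
    have "(INF n\<in>{m..}. ereal (u n)) \<le> ereal (u n)"
      using that by (intro INF_lower) simp
    with r(2) have "ereal (real_of_rat r) < ereal (u n)"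
      by (rule order.strict_trans2)
    then show ?thesis
      by simp
  qed
  with r(1) show "\<exists>q\<in>\<rat>. a < q \<and> (\<exists>m. \<forall>n\<ge>m. q \<le> u n)"
    by (intro bexI[of _ "real_of_rat r"]) auto
next
  assume "\<exists>q\<in>\<rat>. a < q \<and> (\<exists>m. \<forall>n\<ge>m. q \<le> u n)"
  then obtain q m where q: "a < q" "\<forall>n\<ge>m. q \<le> u n"
    by blast
  have "ereal q \<le> (INF n\<in>{m..}. ereal (u n))"
    using q(2) by (intro INF_greatest) auto
  also have "\<dots> \<le> liminf (\<lambda>n. ereal (u n))"
    unfolding liminf_SUP_INF by (rule SUP_upper) simp
  finally have "ereal q \<le> liminf (\<lambda>n. ereal (u n))" .
  moreover have "ereal a < ereal q"
    using q(1) by simp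
  ultimately show "ereal a < liminf (\<lambda>n. ereal (u n))"
    by (rule order.strict_trans2[rotated])
qed

lemma liminf_less_iff_Rats:
  fixes u :: "nat \<Rightarrow> real"
  shows "liminf (\<lambda>n. ereal (u n)) < ereal c \<longleftrightarrow> (\<exists>q\<in>\<rat>. q < c \<and> (\<forall>m. \<exists>n\<ge>m. u n < q))"
proof
  assume "liminf (\<lambda>n. ereal (u n)) < ereal c"
  then obtain r where r: "liminf (\<lambda>n. ereal (u n)) < real_of_rat r" "real_of_rat r < c"
    using ereal_dense3 by fastforce
  have "\<exists>n\<ge>m. u n < real_of_rat r" for m
  proof -
    have "(INF n\<in>{m..}. ereal (u n)) \<le> liminf (\<lambda>n. ereal (u n))"
      unfolding liminf_SUP_INF by (rule SUP_upper) simp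
    then have "(INF n\<in>{m..}. ereal (u n)) < real_of_rat r"
      using r(1) by (rule order.strict_trans1)
    then obtain n where "n \<in> {m..}" "ereal (u n) < real_of_rat r"
      unfolding INF_less_iff by blast
    then show ?thesis
      by auto
  qed
  with r(2) show "\<exists>q\<in>\<rat>. q < c \<and> (\<forall>m. \<exists>n\<ge>m. u n < q)"
    by (intro bexI[of _ "real_of_rat r"]) auto
next
  assume "\<exists>q\<in>\<rat>. q < c \<and> (\<forall>m. \<exists>n\<ge>m. u n < q)"
  then obtain q where q: "q < c" "\<forall>m. \<exists>n\<ge>m. u n < q"
    by blast
  have "liminf (\<lambda>n. ereal (u n)) \<le> ereal q"
    unfolding liminf_SUP_INF
  proof (rule SUP_least)
    fix m :: nat
    obtain n where "n \<ge> m" "u n < q"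
      using q(2) by blast
    then show "(INF n\<in>{m..}. ereal (u n)) \<le> ereal q"
      by (intro INF_lower2[of n]) auto
  qed
  with q(1) show "liminf (\<lambda>n. ereal (u n)) < ereal c"
    by (simp add: le_less_trans)
qed

interpretation coin: prob_space coin
  unfolding coin_def by (rule prob_space_PiM) (simp add: prob_space_measure_pmf)

lemma cyl_eq_prod_emb:
  "cyl z n = prod_emb UNIV (\<lambda>_. measure_pmf (bernoulli_pmf (1/2))) {..<n} (\<Pi>\<^sub>E i\<in>{..<n}. {z i})"
  unfolding cyl_def by (rule set_eqI) (simp add: prod_emb_iff restrict_PiE_iff Pi_iff, blast)

lemma sets_coin_cyl [measurable]: "cyl z n \<in> sets coin"
  unfolding cyl_eq_prod_emb coin_def by (rule sets_PiM_I) auto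

lemma measure_coin_cyl: "measure coin (cyl z n) = (1/2) ^ n"
proof -
  have "emeasure coin (cyl z n) = (\<Prod>i<n. emeasure (measure_pmf (bernoulli_pmf (1/2))) {z i})"
    unfolding cyl_eq_prod_emb coin_def by (rule emeasure_PiM_emb) (auto simp: prob_space_measure_pmf)
  also have "\<dots> = (\<Prod>i<n. ennreal (1/2))"
    by (intro prod.cong refl) (simp add: emeasure_pmf_single split: bool.split)
  also have "\<dots> = ennreal ((1/2) ^ n)"
    by (simp only: prod_constant card_lessThan) (rule ennreal_power, simp)
  finally show ?thesis
    by (simp add: measure_def)
qed

lemma sets_coin_cyl_nbhd: "cyl_nbhd m K \<in> sets coin"
  unfolding cyl_nbhd_def by (rule sets.finite_Union) (auto simp: finite_cyls)

definition cyl_ratio :: "(nat \<Rightarrow> bool) set \<Rightarrow> (nat \<Rightarrow> bool) \<Rightarrow> nat \<Rightarrow> real" where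
  "cyl_ratio A z n = measure coin (A \<inter> cyl z n) / measure coin (cyl z n)"

lemma cyl_ratio_nonneg: "0 \<le> cyl_ratio A z n"
  by (simp add: cyl_ratio_def)

lemma cyl_ratio_le_1: "cyl_ratio A z n \<le> 1"
proof -
  have "measure coin (A \<inter> cyl z n) \<le> measure coin (cyl z n)"
    by (rule coin.finite_measure_mono) auto
  then show ?thesis
    by (simp add: cyl_ratio_def measure_coin_cyl)
qed

lemma liminf_cyl_ratio_bounds:
  "0 \<le> liminf (\<lambda>n. ereal (cyl_ratio K z n))" "liminf (\<lambda>n. ereal (cyl_ratio K z n)) \<le> 1"
  by (intro Liminf_bounded Liminf_le; simp add: cyl_ratio_nonneg cyl_ratio_le_1)+

lemma ereal_lower_density: "ereal (lower_density K z) = liminf (\<lambda>n. ereal (cyl_ratio K z n))"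
  using liminf_cyl_ratio_bounds[of K z] unfolding lower_density_def cyl_ratio_def[symmetric]
  by (cases "liminf (\<lambda>n. ereal (cyl_ratio K z n))") auto

lemma lower_density_bounds: "lower_density K z \<in> {0..1}"
  using liminf_cyl_ratio_bounds[of K z] by (simp flip: ereal_lower_density)

lemma cyl_ratio_cyl_nbhd_decseq: "decseq (\<lambda>m. cyl_ratio (cyl_nbhd m K) z n)"
proof (rule decseq_SucI)
  fix m
  have "measure coin (cyl_nbhd (Suc m) K \<inter> cyl z n) \<le> measure coin (cyl_nbhd m K \<inter> cyl z n)"
    using cyl_nbhd_Suc_subset by (intro coin.finite_measure_mono) (auto simp: sets_coin_cyl_nbhd)
  then show "cyl_ratio (cyl_nbhd (Suc m) K) z n \<le> cyl_ratio (cyl_nbhd m K) z n"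
    by (simp add: cyl_ratio_def measure_coin_cyl divide_right_mono)
qed

lemma cyl_ratio_cyl_nbhd_tendsto:
  assumes "closedin cantor_top K"
  shows "(\<lambda>m. cyl_ratio (cyl_nbhd m K) z n) \<longlonglongrightarrow> cyl_ratio K z n"
proof -
  have "(\<lambda>m. measure coin (cyl_nbhd m K \<inter> cyl z n)) \<longlonglongrightarrow> measure coin (\<Inter>m. cyl_nbhd m K \<inter> cyl z n)"
    using cyl_nbhd_Suc_subset
    by (intro Lim_measure_decseq) (auto simp: sets_coin_cyl_nbhd decseq_Suc_iff)
  moreover have "(\<Inter>m. cyl_nbhd m K \<inter> cyl z n) = K \<inter> cyl z n"
    using Inter_cyl_nbhd[OF assms] by blast
  ultimately have "(\<lambda>m. measure coin (cyl_nbhd m K \<inter> cyl z n)) \<longlonglongrightarrow> measure coin (K \<inter> cyl z n)"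
    by simp
  then show ?thesis
    unfolding cyl_ratio_def by (rule tendsto_divide[OF _ tendsto_const]) (simp add: measure_coin_cyl)
qed

lemma le_cyl_ratio_iff:
  assumes "closedin cantor_top K"
  shows "q \<le> cyl_ratio K z n \<longleftrightarrow> (\<forall>m. q \<le> cyl_ratio (cyl_nbhd m K) z n)"
  using decseq_ge[OF cyl_ratio_cyl_nbhd_decseq cyl_ratio_cyl_nbhd_tendsto[OF assms]]
    LIMSEQ_le_const[OF cyl_ratio_cyl_nbhd_tendsto[OF assms]] order_trans
  by blast

lemma openin_Collect_cyl_ratio_cyl_nbhd:
  "openin cantor_K_top {p \<in> topspace cantor_K_top. P (cyl_ratio (cyl_nbhd m (snd p)) (fst p) n)}"
proof -
  have "openin cantor_K_top {p \<in> topspace cantor_K_top.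
    (\<lambda>(c, N). P (measure coin (N \<inter> c) / measure coin c)) (cyl (fst p) n, cyl_nbhd m (snd p))}"
    by (rule openin_Collect_locally_constant) (rule cantor_K_top_locally_constant_cyl_nbhd)
  then show ?thesis
    by (simp add: cyl_ratio_def)
qed

section \<open>Low Borel classes\<close>

lemma sigma0_2_iff_fsigma_in: "S \<in> sigma0 X (Suc (Suc 0)) \<longleftrightarrow> fsigma_in X S"
proof -
  have "S \<in> sigma0 X (Suc (Suc 0)) \<longleftrightarrow> (\<exists>A::nat \<Rightarrow> 'a set. (\<forall>i. closedin X (A i)) \<and> \<Union>(range A) = S)"
    by (auto simp: closedin_def)
  also have "\<dots> \<longleftrightarrow> fsigma_in X S"
    unfolding fsigma_in_def by (rule countable_union_of_explicit[symmetric]) simp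
  finally show ?thesis .
qed

lemma sigma0_3_if_countable_union_of_gdelta_in:
  assumes "(countable union_of gdelta_in X) S"
  shows "S \<in> sigma0 X (Suc (Suc (Suc 0)))"
proof -
  obtain T :: "nat \<Rightarrow> 'a set" where T: "\<forall>n. gdelta_in X (T n)" "\<Union>(range T) = S"
    using assms countable_union_of_explicit[of "gdelta_in X"] by auto
  then have "\<forall>n. T n \<subseteq> topspace X \<and> topspace X - T n \<in> sigma0 X (Suc (Suc 0))"
    unfolding sigma0_2_iff_fsigma_in by (simp add: gdelta_in_fsigma_in)
  with T(2) show ?thesis
    unfolding sigma0.simps(3) by (intro CollectI exI[of _ T] conjI) simp_all
qed

lemma sigma0_continuous_map_preimage:
  assumes "continuous_map Y X g" "S \<in> sigma0 X (Suc n)"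
  shows "{y \<in> topspace Y. g y \<in> S} \<in> sigma0 Y (Suc n)"
  using assms(2)
proof (induction n arbitrary: S)
  case 0
  then show ?case
    using openin_continuous_map_preimage[OF assms(1)] by simp
next
  case (Suc n)
  then obtain A :: "nat \<Rightarrow> _" where A: "S = \<Union>(range A)"
    "\<forall>i. A i \<subseteq> topspace X \<and> topspace X - A i \<in> sigma0 X (Suc n)"
    by auto
  define B where "B i = {y \<in> topspace Y. g y \<in> A i}" for i
  have compl: "topspace Y - B i = {y \<in> topspace Y. g y \<in> topspace X - A i}" for i
    using continuous_map_image_subset_topspace[OF assms(1)] by (auto simp: B_def)
  have "topspace Y - B i \<in> sigma0 Y (Suc n)" for i
    unfolding compl using A(2) by (intro Suc.IH) blast
  moreover have "B i \<subseteq> topspace Y" for i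
    by (auto simp: B_def)
  ultimately have "\<forall>i. B i \<subseteq> topspace Y \<and> topspace Y - B i \<in> sigma0 Y (Suc n)"
    by blast
  moreover have "{y \<in> topspace Y. g y \<in> S} = \<Union>(range B)"
    using A(1) by (auto simp: B_def)
  ultimately show ?case
    unfolding sigma0.simps(3) by (intro CollectI exI[of _ B] conjI) simp_all
qed

lemma gdelta_in_Collect_ball:
  assumes "countable I" "I \<noteq> {}" "\<And>i. i \<in> I \<Longrightarrow> openin X {x \<in> topspace X. P i x}"
  shows "gdelta_in X {x \<in> topspace X. \<forall>i\<in>I. P i x}"
proof -
  have "{x \<in> topspace X. \<forall>i\<in>I. P i x} = \<Inter>((\<lambda>i. {x \<in> topspace X. P i x}) ` I)"
    using assms(2) by auto
  also have "gdelta_in X \<dots>"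
    by (rule gdelta_in_Inter) (use assms in \<open>auto intro: open_imp_gdelta_in\<close>)
  finally show ?thesis .
qed

lemma openin_Collect_bex:
  assumes "\<And>i. i \<in> I \<Longrightarrow> openin X {x \<in> topspace X. P i x}"
  shows "openin X {x \<in> topspace X. \<exists>i\<in>I. P i x}"
proof -
  have "{x \<in> topspace X. \<exists>i\<in>I. P i x} = (\<Union>i\<in>I. {x \<in> topspace X. P i x})"
    by auto
  then show ?thesis
    using assms by auto
qed

lemma countable_union_of_Collect_bex:
  assumes "countable I" "\<And>i. i \<in> I \<Longrightarrow> (countable union_of P) {x \<in> S. Q i x}"
  shows "(countable union_of P) {x \<in> S. \<exists>i\<in>I. Q i x}"
proof -
  have "{x \<in> S. \<exists>i\<in>I. Q i x} = (\<Union>i\<in>I. {x \<in> S. Q i x})"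
    by auto
  then show ?thesis
    using assms by (simp add: countable_union_of_UN)
qed

lemma countable_union_of_gdelta_in_Collect_mem_open:
  fixes g :: "'a \<Rightarrow> real"
  assumes gt: "\<And>a. (countable union_of gdelta_in X) {x \<in> topspace X. a < g x}"
    and lt: "\<And>b. (countable union_of gdelta_in X) {x \<in> topspace X. g x < b}"
    and "open U"
  shows "(countable union_of gdelta_in X) {x \<in> topspace X. g x \<in> U}"
proof -
  define R where "R = {ab \<in> \<rat> \<times> \<rat>. {fst ab<..<snd ab} \<subseteq> U}"
  have "g x \<in> U \<longleftrightarrow> (\<exists>ab\<in>R. fst ab < g x \<and> g x < snd ab)" for x
  proof
    assume "g x \<in> U"
    then obtain e where e: "e > 0" "ball (g x) e \<subseteq> U"
      using \<open>open U\<close> open_contains_ball by blast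
    obtain a b where "a \<in> \<rat>" "g x - e < a" "a < g x" "b \<in> \<rat>" "g x < b" "b < g x + e"
      using Rats_dense_in_real[of "g x - e" "g x"] Rats_dense_in_real[of "g x" "g x + e"] e(1)
      by auto
    moreover from this have "{a<..<b} \<subseteq> ball (g x) e"
      by (auto simp: ball_def dist_real_def)
    ultimately show "\<exists>ab\<in>R. fst ab < g x \<and> g x < snd ab"
      using e(2) by (intro bexI[of _ "(a, b)"]) (auto simp: R_def)
  qed (auto simp: R_def)
  then have "{x \<in> topspace X. g x \<in> U} = {x \<in> topspace X. \<exists>ab\<in>R. fst ab < g x \<and> g x < snd ab}"
    by simp
  moreover have "countable R"
    by (rule countable_subset[of _ "\<rat> \<times> \<rat>"]) (auto simp: R_def countable_rat)
  moreover have "(countable union_of gdelta_in X) {x \<in> topspace X. fst ab < g x \<and> g x < snd ab}" for ab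
  proof -
    have "{x \<in> topspace X. fst ab < g x \<and> g x < snd ab} =
      {x \<in> topspace X. fst ab < g x} \<inter> {x \<in> topspace X. g x < snd ab}"
      by auto
    then show ?thesis
      using gt lt by (simp add: countable_union_of_Int gdelta_in_Int)
  qed
  ultimately show ?thesis
    by (simp add: countable_union_of_Collect_bex)
qed

section \<open>The lower density is of Baire class 2\<close>

lemma closedin_snd_if_topspace_cantor_K_top:
  "p \<in> topspace cantor_K_top \<Longrightarrow> closedin cantor_top (snd p)"
  unfolding topspace_cantor_K_top by auto

lemma lower_density_gt_iff:
  assumes "closedin cantor_top K"
  shows "a < lower_density K z \<longleftrightarrow>
    (\<exists>q\<in>\<rat> \<inter> {a<..}. \<exists>m. \<forall>i\<in>{m..} \<times> UNIV. q \<le> cyl_ratio (cyl_nbhd (snd i) K) z (fst i))"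
proof -
  have "a < lower_density K z \<longleftrightarrow> ereal a < liminf (\<lambda>n. ereal (cyl_ratio K z n))"
    by (simp flip: ereal_lower_density)
  also have "\<dots> \<longleftrightarrow> (\<exists>q\<in>\<rat>. a < q \<and> (\<exists>m. \<forall>n\<ge>m. q \<le> cyl_ratio K z n))"
    by (rule less_liminf_iff_Rats)
  also have "\<dots> \<longleftrightarrow> (\<exists>q\<in>\<rat> \<inter> {a<..}. \<exists>m. \<forall>i\<in>{m..} \<times> UNIV. q \<le> cyl_ratio (cyl_nbhd (snd i) K) z (fst i))"
    by (auto simp: le_cyl_ratio_iff[OF assms])
  finally show ?thesis .
qed

lemma lower_density_less_iff:
  assumes "closedin cantor_top K"
  shows "lower_density K z < c \<longleftrightarrow>
    (\<exists>q\<in>\<rat> \<inter> {..<c}. \<forall>m\<in>UNIV. \<exists>i\<in>{m..} \<times> UNIV. cyl_ratio (cyl_nbhd (snd i) K) z (fst i) < q)"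
proof -
  have "lower_density K z < c \<longleftrightarrow> liminf (\<lambda>n. ereal (cyl_ratio K z n)) < ereal c"
    by (simp flip: ereal_lower_density)
  also have "\<dots> \<longleftrightarrow> (\<exists>q\<in>\<rat>. q < c \<and> (\<forall>m. \<exists>n\<ge>m. cyl_ratio K z n < q))"
    by (rule liminf_less_iff_Rats)
  also have "\<dots> \<longleftrightarrow>
      (\<exists>q\<in>\<rat> \<inter> {..<c}. \<forall>m\<in>UNIV. \<exists>i\<in>{m..} \<times> UNIV. cyl_ratio (cyl_nbhd (snd i) K) z (fst i) < q)"
    unfolding not_le[symmetric] le_cyl_ratio_iff[OF assms] by (auto simp: Bex_def)
  finally show ?thesis .
qed

lemma countable_union_of_gdelta_in_lower_density_gt:
  "(countable union_of gdelta_in cantor_K_top)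
     {p \<in> topspace cantor_K_top. a < lower_density (snd p) (fst p)}"
proof -
  have "{p \<in> topspace cantor_K_top. a < lower_density (snd p) (fst p)} =
      {p \<in> topspace cantor_K_top. \<exists>j\<in>(\<rat> \<inter> {a<..}) \<times> UNIV.
         \<forall>i\<in>{snd j..} \<times> UNIV. fst j \<le> cyl_ratio (cyl_nbhd (snd i) (snd p)) (fst p) (fst i)}"
  proof (intro Collect_cong conj_cong refl)
    fix p assume "p \<in> topspace cantor_K_top"
    then show "a < lower_density (snd p) (fst p) \<longleftrightarrow> (\<exists>j\<in>(\<rat> \<inter> {a<..}) \<times> UNIV.
         \<forall>i\<in>{snd j..} \<times> UNIV. fst j \<le> cyl_ratio (cyl_nbhd (snd i) (snd p)) (fst p) (fst i))"
      by (auto simp: lower_density_gt_iff closedin_snd_if_topspace_cantor_K_top)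
  qed
  also have "(countable union_of gdelta_in cantor_K_top) \<dots>"
    by (intro countable_union_of_Collect_bex countable_union_of_inc gdelta_in_Collect_ball
        openin_Collect_cyl_ratio_cyl_nbhd) (auto intro: countable_rat)
  finally show ?thesis .
qed

lemma countable_union_of_gdelta_in_lower_density_less:
  "(countable union_of gdelta_in cantor_K_top)
     {p \<in> topspace cantor_K_top. lower_density (snd p) (fst p) < c}"
proof -
  have "{p \<in> topspace cantor_K_top. lower_density (snd p) (fst p) < c} =
      {p \<in> topspace cantor_K_top. \<exists>q\<in>\<rat> \<inter> {..<c}. \<forall>m\<in>UNIV.
         \<exists>i\<in>{m..} \<times> UNIV. cyl_ratio (cyl_nbhd (snd i) (snd p)) (fst p) (fst i) < q}"
    by (intro Collect_cong conj_cong refl)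
      (simp add: lower_density_less_iff closedin_snd_if_topspace_cantor_K_top)
  also have "(countable union_of gdelta_in cantor_K_top) \<dots>"
    by (intro countable_union_of_Collect_bex countable_union_of_inc gdelta_in_Collect_ball
        openin_Collect_bex openin_Collect_cyl_ratio_cyl_nbhd) (auto intro: countable_rat)
  finally show ?thesis .
qed

lemma baire_class_2_lower_density:
  "baire_class cantor_K_top 2 (\<lambda>p. lower_density (snd p) (fst p))"
  unfolding baire_class_def numeral_2_eq_2
  by (intro allI impI sigma0_3_if_countable_union_of_gdelta_in countable_union_of_gdelta_in_Collect_mem_open
      countable_union_of_gdelta_in_lower_density_gt countable_union_of_gdelta_in_lower_density_less)

section \<open>The lower density is not of Baire class 1\<close>

lemma cantor_top_interior_of_eq_empty:
  assumes "\<And>x n. \<exists>y\<in>cyl x n. y \<notin> T"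
  shows "cantor_top interior_of T = {}"
  unfolding interior_of_eq_empty
proof (intro allI impI)
  fix V assume V: "openin cantor_top V \<and> V \<subseteq> T"
  show "V = {}"
  proof (rule ccontr)
    assume "V \<noteq> {}"
    then obtain x where "x \<in> V"
      by blast
    with V obtain n where "cyl x n \<subseteq> T"
      by (meson openin_cantor_top_imp_cyl_subset subset_trans)
    with assms[of x n] show False
      by blast
  qed
qed

lemma countable_finitely_many_true: "countable {x :: nat \<Rightarrow> bool. finite {k. x k}}"
proof (rule countable_subset)
  show "{x :: nat \<Rightarrow> bool. finite {k. x k}} \<subseteq> (\<lambda>A k. k \<in> A) ` {A. finite A}"
    by (auto intro: image_eqI[of _ _ "Collect _"])
qed (simp add: countable_Collect_finite)

lemma cantor_top_interior_of_singleton: "cantor_top interior_of {w} = {}"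
proof (rule cantor_top_interior_of_eq_empty)
  fix x :: "nat \<Rightarrow> bool" and n :: nat
  show "\<exists>y\<in>cyl x n. y \<notin> {w}"
    by (intro bexI[of _ "(if x = w then w(n := \<not> w n) else x)"]) (auto simp: cyl_def fun_eq_iff)
qed

lemma cantor_top_interior_of_subset_infinitely_many_true:
  assumes "T \<subseteq> {x. infinite {k. x k}}"
  shows "cantor_top interior_of T = {}"
proof (rule cantor_top_interior_of_eq_empty)
  fix x :: "nat \<Rightarrow> bool" and n :: nat
  have "finite {k. k < n \<and> x k}"
    by simp
  with assms show "\<exists>y\<in>cyl x n. y \<notin> T"
    by (intro bexI[of _ "\<lambda>k. k < n \<and> x k"]) (auto simp: cyl_def)
qed

lemma not_fsigma_in_infinitely_many_true: "\<not> fsigma_in cantor_top {x. infinite {k. x k}}"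
proof
  let ?Q = "{x :: nat \<Rightarrow> bool. infinite {k. x k}}"
  let ?E = "{x :: nat \<Rightarrow> bool. finite {k. x k}}"
  assume "fsigma_in cantor_top ?Q"
  then obtain \<F> where \<F>: "countable \<F>" "\<And>F. F \<in> \<F> \<Longrightarrow> closedin cantor_top F" "\<Union>\<F> = ?Q"
    unfolding fsigma_in_def union_of_def by blast
  let ?G = "\<F> \<union> (\<lambda>w. {w}) ` ?E"
  have "cantor_top interior_of \<Union>?G = {}"
  proof (rule Baire_category_alt)
    show "completely_metrizable_space cantor_top \<or>
        locally_compact_space cantor_top \<and> regular_space cantor_top"
      using compact_space_cantor_top Hausdorff_space_cantor_top
      by (simp add: compact_imp_locally_compact_space compact_Hausdorff_imp_regular_space)
    show "countable ?G"
      using \<F>(1) countable_finitely_many_true by simp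
    fix T assume "T \<in> ?G"
    then consider "T \<in> \<F>" | w where "T = {w}"
      by blast
    then show "closedin cantor_top T \<and> cantor_top interior_of T = {}"
    proof cases
      case 1
      with \<F>(3) have "T \<subseteq> ?Q"
        by blast
      with 1 show ?thesis
        by (simp add: \<F>(2) cantor_top_interior_of_subset_infinitely_many_true)
    next
      case 2
      then show ?thesis
        by (simp add: closedin_Hausdorff_singleton Hausdorff_space_cantor_top
            cantor_top_interior_of_singleton)
    qed
  qed
  moreover have "\<Union>?G = topspace cantor_top"
    using \<F>(3) by auto
  ultimately show False
    using interior_of_topspace[of cantor_top] by simp
qed

definition first_true_avoiding :: "(nat \<Rightarrow> bool) \<Rightarrow> (nat \<Rightarrow> bool) set" where
  "first_true_avoiding x = {y. \<forall>k. y k \<and> (\<forall>i<k. \<not> y i) \<longrightarrow> \<not> x k}"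

lemma first_true_avoiding_iff:
  assumes "y k" "\<forall>i<k. \<not> y i"
  shows "y \<in> first_true_avoiding x \<longleftrightarrow> \<not> x k"
proof -
  have "k' = k" if "y k'" "\<forall>i<k'. \<not> y i" for k'
    using assms that by (meson linorder_neqE_nat)
  then show ?thesis
    using assms unfolding first_true_avoiding_def by blast
qed

lemma first_true_avoiding_if_all_false: "(\<forall>i. \<not> y i) \<Longrightarrow> y \<in> first_true_avoiding x"
  by (simp add: first_true_avoiding_def)

lemma first_true_exists:
  fixes y :: "nat \<Rightarrow> bool"
  assumes "\<exists>i. y i"
  obtains k where "y k" "\<forall>i<k. \<not> y i"
  using assms exists_least_iff[of y] by blast

lemma closedin_first_true_avoiding: "closedin cantor_top (first_true_avoiding x)"
  unfolding closedin_def topspace_cantor_top openin_cantor_top_iff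
proof (intro conjI ballI)
  fix y assume "y \<in> UNIV - first_true_avoiding x"
  then obtain k where k: "y k" "\<forall>i<k. \<not> y i" "x k"
    by (auto simp: first_true_avoiding_def)
  have "y' \<notin> first_true_avoiding x" if "y' \<in> cyl y (Suc k)" for y'
    using that k by (subst first_true_avoiding_iff[of y' k]) (auto simp: cyl_def)
  then show "\<exists>n. cyl y n \<subseteq> UNIV - first_true_avoiding x"
    by blast
qed simp

lemma openin_first_true_avoiding_subset:
  assumes "openin cantor_top U"
  shows "openin cantor_top {x. first_true_avoiding x \<subseteq> U}"
  unfolding openin_cantor_top_iff
proof
  fix x assume "x \<in> {x. first_true_avoiding x \<subseteq> U}"
  then have x: "first_true_avoiding x \<subseteq> U"
    by simp
  moreover have "(\<lambda>_. False) \<in> first_true_avoiding x"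
    by (simp add: first_true_avoiding_if_all_false)
  ultimately have "(\<lambda>_. False) \<in> U"
    by (rule subsetD)
  with assms obtain m where m: "cyl (\<lambda>_. False) m \<subseteq> U"
    by (rule openin_cantor_top_imp_cyl_subset)
  have "first_true_avoiding x' \<subseteq> U" if x': "x' \<in> cyl x m" for x'
  proof
    fix y assume y: "y \<in> first_true_avoiding x'"
    show "y \<in> U"
    proof (cases "\<exists>i<m. y i")
      case False
      then have "y \<in> cyl (\<lambda>_. False) m"
        by (simp add: cyl_def)
      with m show ?thesis
        by (rule subsetD)
    next
      case True
      then obtain i where i: "i < m" "y i"
        by blast
      then obtain k where k: "y k" "\<forall>j<k. \<not> y j"
        using first_true_exists by blast
      with i have "\<not> i < k"
        by blast
      with i(1) have "k < m"
        by linarith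
      with x' have "x' k = x k"
        by (simp add: cyl_def)
      with y k have "y \<in> first_true_avoiding x"
        by (simp add: first_true_avoiding_iff)
      with x show ?thesis
        by (rule subsetD)
    qed
  qed
  then show "\<exists>n. cyl x n \<subseteq> {x. first_true_avoiding x \<subseteq> U}"
    by (intro exI[of _ m]) auto
qed

lemma openin_first_true_avoiding_meets:
  assumes "openin cantor_top U"
  shows "openin cantor_top {x. first_true_avoiding x \<inter> U \<noteq> {}}"
  unfolding openin_cantor_top_iff
proof
  fix x assume "x \<in> {x. first_true_avoiding x \<inter> U \<noteq> {}}"
  then obtain y where y: "y \<in> first_true_avoiding x" "y \<in> U"
    by blast
  show "\<exists>n. cyl x n \<subseteq> {x. first_true_avoiding x \<inter> U \<noteq> {}}"
  proof (cases "\<exists>i. y i")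
    case False
    then have "y \<in> first_true_avoiding x'" for x'
      by (simp add: first_true_avoiding_if_all_false)
    with y(2) show ?thesis
      by blast
  next
    case True
    then obtain k where k: "y k" "\<forall>i<k. \<not> y i"
      using first_true_exists by blast
    have "y \<in> first_true_avoiding x'" if "x' \<in> cyl x (Suc k)" for x'
      using that y(1) k by (auto simp: cyl_def first_true_avoiding_iff)
    with y(2) show ?thesis
      by blast
  qed
qed

lemma continuous_map_first_true_avoiding:
  "continuous_map cantor_top (vietoris cantor_top) first_true_avoiding"
  by (rule continuous_map_into_vietoris)
    (simp_all add: compactin_cantor_top_iff_closedin closedin_first_true_avoiding
      openin_first_true_avoiding_subset openin_first_true_avoiding_meets)

lemma cyl_ratio_first_true_avoiding_eq_1:
  assumes "\<forall>k\<ge>n. \<not> x k"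
  shows "cyl_ratio (first_true_avoiding x) (\<lambda>_. False) n = 1"
proof -
  have "cyl (\<lambda>_. False) n \<subseteq> first_true_avoiding x"
  proof
    fix y assume y: "y \<in> cyl (\<lambda>_. False) n"
    have "\<not> x k" if "y k" "\<forall>i<k. \<not> y i" for k
    proof -
      have "n \<le> k"
      proof (rule ccontr)
        assume "\<not> n \<le> k"
        with y have "\<not> y k"
          by (simp add: cyl_def)
        with that(1) show False
          by contradiction
      qed
      with assms show ?thesis
        by simp
    qed
    then show "y \<in> first_true_avoiding x"
      by (simp add: first_true_avoiding_def)
  qed
  then show ?thesis
    by (simp add: cyl_ratio_def Int_absorb1 measure_coin_cyl)
qed

lemma cyl_ratio_first_true_avoiding_le_half:
  assumes "x n"
  shows "cyl_ratio (first_true_avoiding x) (\<lambda>_. False) n \<le> 1/2"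
proof -
  have "first_true_avoiding x \<inter> cyl (\<lambda>_. False) n \<subseteq> cyl (\<lambda>_. False) (Suc n)"
  proof
    fix y assume y: "y \<in> first_true_avoiding x \<inter> cyl (\<lambda>_. False) n"
    then have below: "\<forall>i<n. \<not> y i"
      by (simp add: cyl_def)
    have "\<not> y n"
    proof
      assume "y n"
      then have "y \<in> first_true_avoiding x \<longleftrightarrow> \<not> x n"
        using below by (rule first_true_avoiding_iff)
      with y assms show False
        by simp
    qed
    with below show "y \<in> cyl (\<lambda>_. False) (Suc n)"
      by (simp add: cyl_def less_Suc_eq)
  qed
  then have "measure coin (first_true_avoiding x \<inter> cyl (\<lambda>_. False) n) \<le> (1/2) ^ Suc n"
    using coin.finite_measure_mono[OF _ sets_coin_cyl] by (simp only: measure_coin_cyl)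
  then show ?thesis
    by (simp add: cyl_ratio_def measure_coin_cyl field_simps)
qed

lemma lower_density_first_true_avoiding_less_1_iff:
  "lower_density (first_true_avoiding x) (\<lambda>_. False) < 1 \<longleftrightarrow> infinite {k. x k}"
proof -
  let ?r = "cyl_ratio (first_true_avoiding x) (\<lambda>_. False)"
  have "lower_density (first_true_avoiding x) (\<lambda>_. False) < 1 \<longleftrightarrow> liminf (\<lambda>n. ereal (?r n)) < ereal 1"
    by (simp flip: ereal_lower_density)
  also have "\<dots> \<longleftrightarrow> (\<exists>q\<in>\<rat>. q < 1 \<and> (\<forall>m. \<exists>n\<ge>m. ?r n < q))"
    by (rule liminf_less_iff_Rats)
  also have "\<dots> \<longleftrightarrow> infinite {k. x k}"
  proof
    assume "\<exists>q\<in>\<rat>. q < 1 \<and> (\<forall>m. \<exists>n\<ge>m. ?r n < q)"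
    then obtain q where q: "q < 1" "\<forall>m. \<exists>n\<ge>m. ?r n < q"
      by blast
    show "infinite {k. x k}"
    proof
      assume "finite {k. x k}"
      then obtain m where "\<forall>k\<in>{k. x k}. k < m"
        unfolding finite_nat_set_iff_bounded by blast
      then have "\<forall>k\<ge>m. \<not> x k"
        by auto
      moreover obtain n where "n \<ge> m" "?r n < q"
        using q(2) by blast
      ultimately show False
        using q(1) cyl_ratio_first_true_avoiding_eq_1[of n x] by simp
    qed
  next
    assume "infinite {k. x k}"
    have "\<exists>n\<ge>m. ?r n < 3/4" for m
    proof -
      obtain n where "n \<ge> m" "x n"
        using \<open>infinite {k. x k}\<close> unfolding infinite_nat_iff_unbounded_le by blast
      then show ?thesis
        using cyl_ratio_first_true_avoiding_le_half[of x n] by force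
    qed
    then show "\<exists>q\<in>\<rat>. q < 1 \<and> (\<forall>m. \<exists>n\<ge>m. ?r n < q)"
      by (intro bexI[of _ "3/4"]) auto
  qed
  finally show ?thesis .
qed

lemma not_baire_class_1_lower_density:
  "\<not> baire_class cantor_K_top 1 (\<lambda>p. lower_density (snd p) (fst p))"
proof
  let ?S = "{p \<in> topspace cantor_K_top. lower_density (snd p) (fst p) \<in> {..<1}}"
  let ?g = "\<lambda>x. (\<lambda>_. False, first_true_avoiding x)"
  assume "baire_class cantor_K_top 1 (\<lambda>p. lower_density (snd p) (fst p))"
  then have "?S \<in> sigma0 cantor_K_top (Suc (Suc 0))"
    using open_lessThan[of "1::real"] unfolding baire_class_def One_nat_def by blast
  moreover have "continuous_map cantor_top cantor_K_top ?g"
    by (simp add: continuous_map_pairedI continuous_map_first_true_avoiding)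
  ultimately have "{x \<in> topspace cantor_top. ?g x \<in> ?S} \<in> sigma0 cantor_top (Suc (Suc 0))"
    by (rule sigma0_continuous_map_preimage[rotated])
  then have "fsigma_in cantor_top {x \<in> topspace cantor_top. ?g x \<in> ?S}"
    by (simp only: sigma0_2_iff_fsigma_in)
  moreover have "{x \<in> topspace cantor_top. ?g x \<in> ?S} = {x. infinite {k. x k}}"
    unfolding topspace_cantor_K_top
    by (simp add: closedin_first_true_avoiding lower_density_first_true_avoiding_less_1_iff)
  ultimately show False
    using not_fsigma_in_infinitely_many_true by simp
qed

theorem corollary3p5:
  defines "X \<equiv> prod_topology cantor_top (vietoris cantor_top)"
      and "f \<equiv> (\<lambda>(z, K). lower_density K z)"
  shows "(\<forall>p\<in>topspace X. f p \<in> {0..1}) \<and> baire_class X 2 f \<and> \<not> baire_class X 1 f"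
proof -
  have "f = (\<lambda>p. lower_density (snd p) (fst p))"
    by (simp add: f_def fun_eq_iff split_beta)
  then show ?thesis
    unfolding X_def
    using lower_density_bounds baire_class_2_lower_density not_baire_class_1_lower_density by simp
qed

end
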